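(* Consider a deterministic solution of the Marker Problem with $K=1$ round of $T$ steps tolerating $f$ faults. For $n\in[N]$ let $X(n)$ be the set of processes that send or receive at least one message during the $T$ steps of the execution in which all processes are honest and the initially marked process $P_1$ receives input $I_1=n$. Let $n_1,n_2\in[N]\setminus\{1\}$ with $n_1\neq n_2$, and $D=X(n_1)\cap X(n_2)$. Then either (i) $P_{n_1}\in X(n_2)$ or $P_{n_2}\in X(n_1)$, or (ii) $|D|\ge f-1$.
   Context: Model. There are $N$ processes $P_1,\dots,P_N$; $[N]=\{1,\dots,N\}$. Time proceeds in discrete steps $t=0,1,2,\dots$ (synchronous network). At each step every process first receives all messages sent to it at the previous step, each together with the identity of its sender, and then may send messages to any processes; the behaviour of an honest process is given by its protocol, a deterministic function of its inputs and of all messages it has received so far. Communication is authenticated: a process $P_j$ can sign a string $m$, producing $(m)_{P_j}$; every sent message is signed by its sender; no process other than $P_j$ can produce a string containing $(m)_{P_j}$ unless it copied it from a message it received, except that corrupted processes can produce signatures of any corrupted process. An $f$-adversary knows all protocols and all inputs (including future inputs), chooses at time $0$ a set of at most $f$ processes to corrupt, and makes them behave arbitrarily subject to the signature rule; the other processes are honest and follow their protocol. $\mathcal H$ denotes the set of honest processes. A protocol tolerates $f$ faults if its required properties hold against every $f$-adversary. Marker Problem ($K$ rounds of $T$ steps). Time is divided into $K$ consecutive rounds of $T$ steps. At the end of each round every honest process decides either "unmarked" or "marked, with previous marked process $d$" where $d\in[N]\cup\{\perp\}$. The marked process $M$ of round $1$ is $P_1$ if $P_1\in\mathcal H$ and $\perp$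 otherwise; the marked process of round $i+1$ is the honest process that decided "marked" at the end of round $i$, or $\perp$ if there is none. At the beginning of round $i$, if $M\neq\perp$, $M$ receives an input $I_i\in[N]$ ("send the marker to $P_{I_i}$"). Required at the end of every round $i$: (consistency) at most one honest process decides it is marked; (liveness) if $M\in\mathcal H$, $I_i=n$ and $P_n\in\mathcal H$, then $P_n$ decides it is marked with previous marked process $M$; (non-impersonation) if $M=\perp$ and an honest process decides it is marked with previous marked process $d$, then $d\notin\mathcal H$. *)

theory Defs
  imports Main
begin

(* Processes are the natural numbers 1..N; P_1 is process 1. *)

(* Strings / messages: atoms, signatures (m)_{P_j} = Sig j m, and concatenation. *)
datatype msg = Atom nat | Sig nat msg | Pair msg msg

(* Decision at the end of a round: "unmarked" or "marked, with previous marked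
   process d", where d = None encodes \<bottom> and d = Some j encodes P_j. *)
datatype decision = Unmarked | Marked "nat option"

fun parts :: "msg \<Rightarrow> msg set" where
  "parts (Atom a) = {Atom a}"
| "parts (Sig j m) = insert (Sig j m) (parts m)"
| "parts (Pair a b) = insert (Pair a b) (parts a \<union> parts b)"

(* A trace records, for each step t, the set of triples (sender, recipient, payload)
   of messages sent at step t.  The recipient receives them at step t+1 as the
   signed string Sig sender payload (every sent message is signed by its sender). *)
type_synonym trace = "nat \<Rightarrow> (nat \<times> nat \<times> msg) set"

(* honest sending behaviour: process, its input, list of the message sets received
   at the previous steps  \<mapsto>  set of (recipient, payload) to send now *)
type_synonym send_protocol = "nat \<Rightarrow> nat option \<Rightarrow> msg set list \<Rightarrow> (nat \<times> msg) set"
type_synonym decide_protocol = "nat \<Rightarrow> nat option \<Rightarrow> msg set list \<Rightarrow> decision"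

definition recv :: "trace \<Rightarrow> nat \<Rightarrow> nat \<Rightarrow> msg set" where
  "recv tr i u = {Sig s m | s m. (s, i, m) \<in> tr u}"

definition hist :: "trace \<Rightarrow> nat \<Rightarrow> nat \<Rightarrow> msg set list" where
  "hist tr i t = map (recv tr i) [0..<t]"

definition copied :: "msg set list \<Rightarrow> msg \<Rightarrow> bool" where
  "copied h x \<longleftrightarrow> (\<exists>X\<in>set h. \<exists>y\<in>X. x \<in> parts y)"

(* signature rule: a process whose own signing keys are A and which has received h
   may send m only if every signature in m is by a member of A or copied *)
definition sig_ok :: "nat set \<Rightarrow> msg set list \<Rightarrow> msg \<Rightarrow> bool" where
  "sig_ok A h m \<longleftrightarrow> (\<forall>j m'. Sig j m' \<in> parts m \<longrightarrow> j \<in> A \<or> copied h (Sig j m'))"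

definition authentic_protocol :: "send_protocol \<Rightarrow> bool" where
  "authentic_protocol sendf \<longleftrightarrow>
     (\<forall>i inp h k m. (k, m) \<in> sendf i inp h \<longrightarrow> sig_ok {i} h m)"

(* inputs for K = 1: the marked process P_1 (if honest) receives I_1 = n *)
definition marker_input :: "nat set \<Rightarrow> nat \<Rightarrow> nat \<Rightarrow> nat option" where
  "marker_input C n i = (if i = 1 \<and> 1 \<notin> C then Some n else None)"

(* an execution of the T steps of round 1 with corrupted set C and input I_1 = n:
   honest processes follow the protocol, corrupted ones send arbitrary messages
   subject to the signature rule (they may sign for any corrupted process) *)
definition execution ::
  "nat \<Rightarrow> nat \<Rightarrow> send_protocol \<Rightarrow> nat set \<Rightarrow> nat \<Rightarrow> trace \<Rightarrow> bool" where
  "execution N T sendf C n tr \<longleftrightarrow>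
     C \<subseteq> {1..N} \<and>
     (\<forall>t<T. \<forall>(s, k, m)\<in>tr t. s \<in> {1..N} \<and> k \<in> {1..N}) \<and>
     (\<forall>t<T. \<forall>i\<in>{1..N} - C.
         {(k, m). (i, k, m) \<in> tr t} =
         {(k, m) \<in> sendf i (marker_input C n i) (hist tr i t). k \<in> {1..N}}) \<and>
     (\<forall>t<T. \<forall>(s, k, m)\<in>tr t. s \<in> C \<longrightarrow> sig_ok C (hist tr s t) m)"

definition solves_marker1 ::
  "nat \<Rightarrow> nat \<Rightarrow> nat \<Rightarrow> send_protocol \<Rightarrow> decide_protocol \<Rightarrow> bool" where
  "solves_marker1 N T f sendf dec \<longleftrightarrow>
     (\<forall>C n tr. card C \<le> f \<longrightarrow> n \<in> {1..N} \<longrightarrow> execution N T sendf C n tr \<longrightarrow>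
       (let H = {1..N} - C;
            d = (\<lambda>i. dec i (marker_input C n i) (hist tr i T))
        in card {i \<in> H. d i \<noteq> Unmarked} \<le> 1 \<and>
           (1 \<in> H \<and> n \<in> H \<longrightarrow> d n = Marked (Some 1)) \<and>
           (1 \<notin> H \<longrightarrow> (\<forall>i\<in>H. \<forall>j. d i = Marked (Some j) \<longrightarrow> j \<notin> H))))"

definition active :: "nat \<Rightarrow> trace \<Rightarrow> nat set" where
  "active T tr = {i. \<exists>t<T. \<exists>k m. (i, k, m) \<in> tr t \<or> (k, i, m) \<in> tr t}"

end

theory Submission
  imports Defs
begin

text \<open>
  Suppose neither P_n1 is active in the execution for input n1 nor P_n2 in the one for n2,
  and the two executions share fewer than f - 1 active processes. Superimpose the two
  executions and corrupt P_1 together with the common active processes: at most f processes.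
  Every other process is active in at most one of the two executions, so it sees exactly what
  it saw there and behaves honestly; the corrupted ones merely replay messages that are
  correctly signed. Hence P_n1 and P_n2 are honest, see their original histories, and both
  decide that they are marked, contradicting consistency.
\<close>

definition merge_trace :: "trace \<Rightarrow> trace \<Rightarrow> trace" where
  "merge_trace tr1 tr2 = (\<lambda>u. tr1 u \<union> tr2 u)"

lemma merge_trace_commute: "merge_trace tr1 tr2 = merge_trace tr2 tr1"
  unfolding merge_trace_def by auto

lemma sent_merge_trace_left:
  assumes "i \<notin> active T tr2" "t < T"
  shows "{(k, m). (i, k, m) \<in> merge_trace tr1 tr2 t} = {(k, m). (i, k, m) \<in> tr1 t}"
  using assms unfolding merge_trace_def active_def by blast

lemma hist_merge_trace_left:
  assumes "i \<notin> active T tr2" "t \<le> T"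
  shows "hist (merge_trace tr1 tr2) i t = hist tr1 i t"
  unfolding hist_def
proof (rule map_cong[OF refl])
  fix u assume "u \<in> set [0..<t]"
  with assms show "recv (merge_trace tr1 tr2) i u = recv tr1 i u"
    unfolding recv_def merge_trace_def active_def by fastforce
qed

lemma hist_merge_trace_right:
  assumes "i \<notin> active T tr1" "t \<le> T"
  shows "hist (merge_trace tr1 tr2) i t = hist tr2 i t"
  using hist_merge_trace_left[OF assms, of tr2] by (simp add: merge_trace_commute)

lemma copied_hist_mono:
  assumes "copied (hist tr s t) x" "\<And>u. tr u \<subseteq> tr' u"
  shows "copied (hist tr' s t) x"
proof -
  have "recv tr s u \<subseteq> recv tr' s u" for u
    using assms(2) unfolding recv_def by blast
  then show ?thesis
    using assms(1) unfolding copied_def hist_def by fastforce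
qed

lemma execution_sig_ok_superset:
  assumes "authentic_protocol sendf" "execution N T sendf {} n tr"
    and "t < T" "(s, k, m) \<in> tr t" "s \<in> C" "\<And>u. tr u \<subseteq> tr' u"
  shows "sig_ok C (hist tr' s t) m"
proof -
  have "s \<in> {1..N}"
    using assms(2-4) unfolding execution_def by fastforce
  with assms(2-4) have "(k, m) \<in> sendf s (marker_input {} n s) (hist tr s t)"
    unfolding execution_def by blast
  then have "sig_ok {s} (hist tr s t) m"
    using assms(1) unfolding authentic_protocol_def by blast
  then show ?thesis
    using assms(5,6) copied_hist_mono unfolding sig_ok_def by blast
qed

lemma execution_honest_step_merge_trace:
  assumes "execution N T sendf {} n1 tr1"
    and "i \<in> {1..N}" "i \<noteq> 1" "i \<notin> active T tr2" "t < T" "1 \<in> C"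
  shows "{(k, m). (i, k, m) \<in> merge_trace tr1 tr2 t} =
         {(k, m) \<in> sendf i (marker_input C n i) (hist (merge_trace tr1 tr2) i t). k \<in> {1..N}}"
proof -
  have "{(k, m). (i, k, m) \<in> merge_trace tr1 tr2 t} = {(k, m). (i, k, m) \<in> tr1 t}"
    using sent_merge_trace_left assms(4,5) .
  also have "\<dots> = {(k, m) \<in> sendf i (marker_input {} n1 i) (hist tr1 i t). k \<in> {1..N}}"
    using assms(1,2,5) unfolding execution_def by blast
  also have "\<dots> = {(k, m) \<in> sendf i (marker_input C n i) (hist (merge_trace tr1 tr2) i t).
                     k \<in> {1..N}}"
    using assms(3-6) by (simp add: marker_input_def hist_merge_trace_left)
  finally show ?thesis .
qed

lemma execution_merge_trace:
  assumes "authentic_protocol sendf"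
    and "execution N T sendf {} n1 tr1" "execution N T sendf {} n2 tr2"
    and "1 \<in> C" "active T tr1 \<inter> active T tr2 \<subseteq> C" "C \<subseteq> {1..N}"
  shows "execution N T sendf C n (merge_trace tr1 tr2)"
  unfolding execution_def
proof (intro conjI allI impI ballI)
  show "C \<subseteq> {1..N}" by fact
next
  fix t x assume "t < T" "x \<in> merge_trace tr1 tr2 t"
  with assms(2,3) show "case x of (s, k, m) \<Rightarrow> s \<in> {1..N} \<and> k \<in> {1..N}"
    unfolding merge_trace_def execution_def by fastforce
next
  fix t i assume t: "t < T" and i: "i \<in> {1..N} - C"
  then have "i \<noteq> 1" "i \<in> {1..N}" using assms(4) by auto
  consider "i \<notin> active T tr2" | "i \<notin> active T tr1"
    using i assms(5) by blast
  then show "{(k, m). (i, k, m) \<in> merge_trace tr1 tr2 t} =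
    {(k, m) \<in> sendf i (marker_input C n i) (hist (merge_trace tr1 tr2) i t). k \<in> {1..N}}"
  proof cases
    case 1
    then show ?thesis
      using execution_honest_step_merge_trace[OF assms(2)] \<open>i \<noteq> 1\<close> \<open>i \<in> {1..N}\<close> t assms(4)
      by blast
  next
    case 2
    then show ?thesis
      using execution_honest_step_merge_trace[OF assms(3)] \<open>i \<noteq> 1\<close> \<open>i \<in> {1..N}\<close> t assms(4)
      by (simp add: merge_trace_commute)
  qed
next
  fix t x assume t: "t < T" and x: "x \<in> merge_trace tr1 tr2 t"
  have "\<And>u. tr1 u \<subseteq> merge_trace tr1 tr2 u" "\<And>u. tr2 u \<subseteq> merge_trace tr1 tr2 u"
    unfolding merge_trace_def by auto
  with x show "case x of (s, k, m) \<Rightarrow> s \<in> C \<longrightarrow> sig_ok C (hist (merge_trace tr1 tr2) s t) m"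
    using execution_sig_ok_superset[OF assms(1,2) t] execution_sig_ok_superset[OF assms(1,3) t]
    unfolding merge_trace_def by auto
qed

lemma solves_marker1_all_honest_marked:
  assumes "solves_marker1 N T f sendf dec" "execution N T sendf {} n tr"
    and "n \<in> {1..N}" "n \<noteq> 1"
  shows "dec n None (hist tr n T) = Marked (Some 1)"
proof -
  have "dec n (marker_input {} n n) (hist tr n T) = Marked (Some 1)"
    using assms(1-3) unfolding solves_marker1_def Let_def by fastforce
  with assms(4) show ?thesis by (simp add: marker_input_def)
qed

lemma solves_marker1_consistency:
  assumes "solves_marker1 N T f sendf dec" "card C \<le> f" "n \<in> {1..N}"
    and "execution N T sendf C n tr"
    and "i \<in> {1..N} - C" "j \<in> {1..N} - C" "i \<noteq> j"
    and "dec i (marker_input C n i) (hist tr i T) \<noteq> Unmarked"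
    and "dec j (marker_input C n j) (hist tr j T) \<noteq> Unmarked"
  shows False
proof -
  let ?marked = "{i \<in> {1..N} - C. dec i (marker_input C n i) (hist tr i T) \<noteq> Unmarked}"
  have "card ?marked \<le> 1"
    using assms(1-4) unfolding solves_marker1_def Let_def by blast
  moreover have "card {i, j} \<le> card ?marked"
    using assms(5-9) by (intro card_mono) auto
  ultimately show False
    using assms(7) by simp
qed

theorem mainTheorem6:
  fixes N T f n1 n2 :: nat
    and sendf :: send_protocol and dec :: decide_protocol
    and tr1 tr2 :: trace
  assumes "authentic_protocol sendf"
    and "solves_marker1 N T f sendf dec"
    and "n1 \<in> {1..N}" and "n2 \<in> {1..N}" and "n1 \<noteq> 1" and "n2 \<noteq> 1" and "n1 \<noteq> n2"
    and "execution N T sendf {} n1 tr1"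
    and "execution N T sendf {} n2 tr2"
  shows "n1 \<in> active T tr2 \<or> n2 \<in> active T tr1 \<or>
         card (active T tr1 \<inter> active T tr2) \<ge> f - 1"
proof (rule ccontr)
  assume "\<not> ?thesis"
  then have n1: "n1 \<notin> active T tr2" and n2: "n2 \<notin> active T tr1"
    and small: "card (active T tr1 \<inter> active T tr2) < f - 1" by auto
  define C where "C = insert 1 (active T tr1 \<inter> active T tr2)"
  have "active T tr1 \<subseteq> {1..N}"
    using assms(8) unfolding active_def execution_def by fastforce
  then have "C \<subseteq> {1..N}" "card C \<le> f"
    using assms(3) small card_insert_le_m1[of f "active T tr1 \<inter> active T tr2" 1]
    unfolding C_def by (auto intro: finite_subset)
  then have "execution N T sendf C n1 (merge_trace tr1 tr2)"
    using execution_merge_trace[OF assms(1,8,9)] unfolding C_def by blast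
  moreover have "dec n1 (marker_input C n1 n1) (hist (merge_trace tr1 tr2) n1 T) \<noteq> Unmarked"
    using solves_marker1_all_honest_marked[OF assms(2,8,3,5)] n1
    by (simp add: C_def marker_input_def hist_merge_trace_left)
  moreover have "dec n2 (marker_input C n1 n2) (hist (merge_trace tr1 tr2) n2 T) \<noteq> Unmarked"
    using solves_marker1_all_honest_marked[OF assms(2,9,4,6)] n2
    by (simp add: C_def marker_input_def hist_merge_trace_right)
  ultimately show False
    using solves_marker1_consistency[OF assms(2) \<open>card C \<le> f\<close> assms(3)] assms(3-7) n1 n2
    unfolding C_def by auto
qed

end
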